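(* Let $n\ge2$ and consider a line (path) on $n$ nodes, where the node at position $i$ initially has integer load $i$. Run any matching-based integral load-balancing algorithm against the following adversary: the graph is always a path on the $n$ nodes; in each round, after each pair of adjacent nodes in the matching exchanges load, the adversary swaps the two nodes of that pair if necessary so that the lighter one is at the smaller position (no other changes). Let $a_t[i]$ be the load of the node at position $i$ of the path at time $t$ ($a_1[i]=i$) and $p_t^k=\sum_{j=1}^k a_t[j]$ (with $p_t^0=0$). Then for all $t\ge1$ and all $k\in\{0,1,\dots,n\}$, $p_t^k\le p_1^k$.
   Context: Integral load balancing: loads are non-negative integers that remain integers, total load preserved. A matching-based algorithm: in each round, the pairs of nodes exchanging load form a matching of the current graph, and each matched pair redistributes its combined load between its two nodes as integers; unmatched nodes keep their load. Nodes may exchange information with all their neighbours each round. *)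

theory Defs
  imports Main
begin

text \<open>Loads on a path with positions 1..n are functions nat => nat (values outside
  1..n are irrelevant). A matching of the path is a set M of left endpoints i
  (edge {i, i+1}, 1 <= i < n) with no two consecutive indices.\<close>

definition path_matching :: "nat \<Rightarrow> nat set \<Rightarrow> bool" where
  "path_matching n M \<longleftrightarrow> M \<subseteq> {1..<n} \<and> (\<forall>i\<in>M. Suc i \<notin> M)"

definition adv_round :: "nat \<Rightarrow> (nat \<Rightarrow> nat) \<Rightarrow> (nat \<Rightarrow> nat) \<Rightarrow> bool" where
  "adv_round n a a' \<longleftrightarrow>
     (\<exists>M. path_matching n M \<and>
        (\<forall>i\<in>M. \<exists>x y. x + y = a i + a (Suc i) \<and>
                         a' i = min x y \<and> a' (Suc i) = max x y) \<and>
        (\<forall>j\<in>{1..n}. j \<notin> M \<and> j - 1 \<notin> M \<longrightarrow> a' j = a j))"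

definition prefix_load :: "(nat \<Rightarrow> nat) \<Rightarrow> nat \<Rightarrow> nat" where
  "prefix_load a k = (\<Sum>j=1..k. a j)"

end

theory Submission
  imports Defs
begin

text \<open>The invariant is that every prefix sum \<open>p k\<close> never exceeds its initial value \<open>B k\<close>.
  A round leaves \<open>p k\<close> unchanged unless \<open>k\<close> is the left end of a matched pair. In that case
  the adversary puts the smaller half of \<open>a k + a (k+1)\<close> at position \<open>k\<close>, so the new \<open>p k\<close>
  is at most the mean of the old \<open>p (k-1)\<close> and \<open>p (k+1)\<close>, hence at most
  \<open>(B (k-1) + B (k+1)) / 2\<close>. Since the initial loads grow by at most one per position, this
  is at most \<open>B k + 1/2\<close>, and integrality gives \<open>B k\<close>.\<close>

lemma prefix_load_0 [simp]: "prefix_load a 0 = 0"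
  by (simp add: prefix_load_def)

lemma prefix_load_Suc [simp]: "prefix_load a (Suc k) = prefix_load a k + a (Suc k)"
  by (simp add: prefix_load_def)

lemma prefix_load_midpoint_le:
  assumes "b (Suc k) \<le> b k + 1" and "1 \<le> k"
  shows "prefix_load b (k - 1) + prefix_load b (Suc k) \<le> 2 * prefix_load b k + 1"
proof -
  obtain l where "k = Suc l" using \<open>1 \<le> k\<close> by (cases k) auto
  then show ?thesis using assms(1) by simp
qed

context
  fixes n :: nat and M :: "nat set" and a a' :: "nat \<Rightarrow> nat"
  assumes matching: "path_matching n M"
    and matched: "\<forall>i\<in>M. \<exists>x y. x + y = a i + a (Suc i) \<and> a' i = min x y \<and> a' (Suc i) = max x y"
    and unmatched: "\<forall>j\<in>{1..n}. j \<notin> M \<and> j - 1 \<notin> M \<longrightarrow> a' j = a j"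
begin

lemma matched_pair_sum: "i \<in> M \<Longrightarrow> a' i + a' (Suc i) = a i + a (Suc i)"
  using matched by force

lemma matched_left_le: "i \<in> M \<Longrightarrow> 2 * a' i \<le> a i + a (Suc i)"
  using matched by force

lemma matched_bounds: "i \<in> M \<Longrightarrow> 1 \<le> i \<and> i < n \<and> i - 1 \<notin> M \<and> Suc i \<notin> M"
  using matching unfolding path_matching_def by (cases i) auto

lemma prefix_load_unmatched:
  "k \<le> n \<Longrightarrow> k \<notin> M \<Longrightarrow> prefix_load a' k = prefix_load a k"
proof (induction k rule: less_induct)
  case (less k)
  show ?case
  proof (cases k)
    case 0
    then show ?thesis by simp
  next
    case (Suc m)
    show ?thesis
    proof (cases "m \<in> M")
      case False
      then have "a' k = a k" using unmatched less.prems Suc by auto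
      moreover have "prefix_load a' m = prefix_load a m" using less Suc False by simp
      ultimately show ?thesis using Suc by simp
    next
      case True
      then obtain l where m: "m = Suc l" and "l \<notin> M"
        using matched_bounds by (cases m) auto
      then have "prefix_load a' l = prefix_load a l" using less Suc by simp
      with matched_pair_sum[OF True] show ?thesis using Suc m by simp
    qed
  qed
qed

lemma prefix_load_matched_le:
  assumes "k \<in> M"
  shows "2 * prefix_load a' k \<le> prefix_load a (k - 1) + prefix_load a (Suc k)"
proof -
  obtain l where k: "k = Suc l" using matched_bounds[OF assms] by (cases k) auto
  have "prefix_load a' l = prefix_load a l"
    using prefix_load_unmatched matched_bounds[OF assms] k by simp
  with matched_left_le[OF assms] show ?thesis using k by simp
qed

end

lemma adv_round_preserves_prefix_bound:
  assumes round: "adv_round n a a'"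
    and bound: "\<forall>k\<le>n. prefix_load a k \<le> B k"
    and midpoint: "\<And>k. 1 \<le> k \<Longrightarrow> k < n \<Longrightarrow> B (k - 1) + B (Suc k) \<le> 2 * B k + 1"
  shows "\<forall>k\<le>n. prefix_load a' k \<le> B k"
proof (intro allI impI)
  fix k assume "k \<le> n"
  obtain M where M: "path_matching n M"
    and matched: "\<forall>i\<in>M. \<exists>x y. x + y = a i + a (Suc i) \<and> a' i = min x y \<and> a' (Suc i) = max x y"
    and unmatched: "\<forall>j\<in>{1..n}. j \<notin> M \<and> j - 1 \<notin> M \<longrightarrow> a' j = a j"
    using round unfolding adv_round_def by blast
  show "prefix_load a' k \<le> B k"
  proof (cases "k \<in> M")
    case False
    then show ?thesis
      using prefix_load_unmatched[OF M matched unmatched] bound \<open>k \<le> n\<close> by simp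
  next
    case True
    with matched_bounds[OF M matched unmatched] have "1 \<le> k" "k < n" by auto
    have "2 * prefix_load a' k \<le> prefix_load a (k - 1) + prefix_load a (Suc k)"
      using prefix_load_matched_le[OF M matched unmatched True] .
    also have "\<dots> \<le> B (k - 1) + B (Suc k)"
      using bound[rule_format, of "k - 1"] bound[rule_format, of "Suc k"] \<open>k < n\<close>
      by (intro add_mono) simp_all
    also have "\<dots> \<le> 2 * B k + 1"
      using midpoint \<open>1 \<le> k\<close> \<open>k < n\<close> .
    finally show ?thesis by linarith
  qed
qed

theorem lemma4:
  fixes n :: nat and a :: "nat \<Rightarrow> nat \<Rightarrow> nat"
  assumes "n \<ge> 2"
    and "\<forall>i\<in>{1..n}. a 1 i = i"
    and "\<forall>t\<ge>1. adv_round n (a t) (a (Suc t))"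
  shows "\<forall>t\<ge>1. \<forall>k\<in>{0..n}. prefix_load (a t) k \<le> prefix_load (a 1) k"
proof (intro allI impI)
  have midpoint: "prefix_load (a 1) (k - 1) + prefix_load (a 1) (Suc k) \<le> 2 * prefix_load (a 1) k + 1"
    if "1 \<le> k" "k < n" for k
    using prefix_load_midpoint_le[of "a 1" k] assms(2) that by simp
  fix t :: nat assume "1 \<le> t"
  then have "\<forall>k\<le>n. prefix_load (a t) k \<le> prefix_load (a 1) k"
  proof (induction t rule: dec_induct)
    case base
    then show ?case by simp
  next
    case (step t)
    with assms(3) show ?case
      using adv_round_preserves_prefix_bound[of n "a t" "a (Suc t)", OF _ _ midpoint] by simp
  qed
  then show "\<forall>k\<in>{0..n}. prefix_load (a t) k \<le> prefix_load (a 1) k" by simp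
qed

end
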